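(* Fix $\beta\neq0$. For each of the algorithms RSVI2 and RSQ2 and any fixed $\delta\in(0,1]$, with probability at least $1-\delta/2$, $$\mathcal{R}(K)\lesssim\sum_{k=1}^K\sum_{h=1}^H\Delta_h(s_h^k,a_h^k;\tau^k_{h-1})+\frac{e^{|\beta|H}-1}{|\beta|}H\log(\log K/\delta).$$
   Context: Episodic finite-horizon tabular MDP with $|\mathcal{S}|=S$, $|\mathcal{A}|=A$, horizon $H$, $K$ episodes, transitions $\mathcal{P}_h(\cdot\mid s,a)$, deterministic rewards $r_h\in[0,1]$, fixed initial state $s_1$. For policy $\pi=(\pi_h)$ and $\beta\ne0$: $V_h^\pi(s)=\frac1\beta\log\mathbb{E}[e^{\beta\sum_{i=h}^H r_i(s_i,\pi_i(s_i))}\mid s_h=s]$, $Q_h^\pi(s,a)$ likewise with $a_h=a$; $V^*_h=\sup_\pi V^\pi_h$ attained by $\pi^*$, $Q^*_h=Q^{\pi^*}_h$. $\pi^k$ is the (greedy) policy the algorithm executes in episode $k$, $\tau^k=((s_h^k,a_h^k))_{h\in[H]}$ is the sampled trajectory of episode $k$, $\tau^k_{h-1}$ its first $h-1$ pairs. Regret $\mathcal{R}(K)=\sum_k(V_1^*-V_1^{\pi^k})(s_1)$. For $\tau_{h-1}=((s_j,a_j))_{j<h}$, $R(\tau_{h-1})=\sum_{j<h}r_j(s_j,a_j)$ (zero if $h=1$), and the cascaded gap is $\Delta_h(s,a;\tau_{h-1})=\psi_\beta e^{\beta R(\tau_{h-1})}[e^{\beta V^*_h(s)}-e^{\beta Q^*_h(s,a)}]$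 with $\psi_\beta=1/\beta$ for $\beta>0$, $e^{-\beta H}/\beta$ for $\beta<0$. $\lesssim$ hides universal constants. RSVI2 (inputs $K,\delta,\beta$): initialize $Q_h,V_h\leftarrow H-h+1$, $w_h,N_h\leftarrow0$ for $h\in[H+1]$; in episode $k$, for $h=H,\dots,1$ and $(s,a)$ with $N_h(s,a)\ge1$: $w_h(s,a)=\frac{1}{N_h(s,a)}\sum_{i<k}\mathbb{1}\{(s_h^i,a_h^i)=(s,a)\}e^{\beta[r_h(s,a)+V_{h+1}(s^i_{h+1})]}$, $b_h=c|e^{\beta(H-h+1)}-1|\sqrt{S\log(2SAHK/\delta)/N_h(s,a)}$, $G_h=\min\{e^{\beta(H-h+1)},w_h+b_h\}$ ($\beta>0$) or $\max\{e^{\beta(H-h+1)},w_h-b_h\}$ ($\beta<0$), $Q_h=\frac1\beta\log G_h$, $V_h(s)=\max_{a'}Q_h(s,a')$; then act $a_h=\arg\max_aQ_h(s_h,a)$, $h=1..H$, incrementing $N_h(s_h,a_h)$. RSQ2 (inputs $K,\delta,\beta$): initialize $Q_h,V_h\leftarrow H-h+1$ ($\beta>0$) or $0$ ($\beta<0$), $V_{H+1}\equiv0$, $N_h\leftarrow0$, $\alpha_t=\frac{H+1}{H+t}$, $G_h=e^{\beta Q_h}$; each episode for $h=1..H$: act $a_h=\arg\max Q_h(s_h,\cdot)$, observe $r_h,s_{h+1}$, $t=N_h(s_h,a_h)\leftarrow N_h(s_h,a_h)+1$, $w=(1-\alpha_t)G_h(s_h,a_h)+\alpha_te^{\beta[r_h(s_h,a_h)+V_{h+1}(s_{h+1})]}$,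 $b_{h,t}=c|e^{\beta(H-h+1)}-1|\sqrt{H\log(2SAHK/\delta)/t}$, $G_h(s_h,a_h)=\min\{e^{\beta(H-h+1)},w+\alpha_tb_{h,t}\}$ ($\beta>0$) or $\max\{e^{\beta(H-h+1)},w-\alpha_tb_{h,t}\}$ ($\beta<0$), $Q_h=\frac1\beta\log G_h$, $V_h(s_h)=\max Q_h(s_h,\cdot)$. Here $c>0$ is an appropriate universal constant. *)

theory Defs
  imports "HOL-Probability.Probability"
begin

text \<open>Episodic tabular MDP. States are 0..<nS, actions 0..<nA, steps 1..hor.
  Trajectories are lists of (state, action) pairs; element h-1 is step h.\<close>

record mdp =
  nS :: nat
  nA :: nat
  hor :: nat
  trans :: "nat \<Rightarrow> nat \<Rightarrow> nat \<Rightarrow> nat pmf"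
  rew :: "nat \<Rightarrow> nat \<Rightarrow> nat \<Rightarrow> real"
  init :: nat

definition valid_mdp :: "mdp \<Rightarrow> bool" where
  "valid_mdp M \<longleftrightarrow> nS M \<ge> 1 \<and> nA M \<ge> 1 \<and> hor M \<ge> 1 \<and> init M < nS M \<and>
     (\<forall>h s a. 0 \<le> rew M h s a \<and> rew M h s a \<le> 1) \<and>
     (\<forall>h s a. s < nS M \<longrightarrow> a < nA M \<longrightarrow> set_pmf (trans M h s a) \<subseteq> {..<nS M})"

type_synonym policy = "nat \<Rightarrow> nat \<Rightarrow> nat"
type_synonym traj = "(nat \<times> nat) list"
type_synonym hist = "traj list"

definition policies :: "mdp \<Rightarrow> policy set" where
  "policies M = {\<pi>. \<forall>h s. \<pi> h s < nA M}"

text \<open>Wn M beta pi n h s = E[exp(beta * sum of the n rewards from step h on) | s_h = s].\<close>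
primrec Wn :: "mdp \<Rightarrow> real \<Rightarrow> policy \<Rightarrow> nat \<Rightarrow> nat \<Rightarrow> nat \<Rightarrow> real" where
  "Wn M \<beta> \<pi> 0 h s = 1"
| "Wn M \<beta> \<pi> (Suc n) h s = exp (\<beta> * rew M h s (\<pi> h s)) *
     measure_pmf.expectation (trans M h s (\<pi> h s)) (\<lambda>s'. Wn M \<beta> \<pi> n (Suc h) s')"

definition Vpi :: "mdp \<Rightarrow> real \<Rightarrow> policy \<Rightarrow> nat \<Rightarrow> nat \<Rightarrow> real" where
  "Vpi M \<beta> \<pi> h s = ln (Wn M \<beta> \<pi> (hor M + 1 - h) h s) / \<beta>"

definition Qpi :: "mdp \<Rightarrow> real \<Rightarrow> policy \<Rightarrow> nat \<Rightarrow> nat \<Rightarrow> nat \<Rightarrow> real" where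
  "Qpi M \<beta> \<pi> h s a = ln (exp (\<beta> * rew M h s a) *
     measure_pmf.expectation (trans M h s a) (\<lambda>s'. Wn M \<beta> \<pi> (hor M - h) (Suc h) s')) / \<beta>"

definition Vstar :: "mdp \<Rightarrow> real \<Rightarrow> nat \<Rightarrow> nat \<Rightarrow> real" where
  "Vstar M \<beta> h s = (SUP \<pi>\<in>policies M. Vpi M \<beta> \<pi> h s)"

definition pistar :: "mdp \<Rightarrow> real \<Rightarrow> policy" where
  "pistar M \<beta> = (SOME \<pi>. \<pi> \<in> policies M \<and>
     (\<forall>h\<in>{1..hor M}. \<forall>s<nS M. Vpi M \<beta> \<pi> h s = Vstar M \<beta> h s))"

definition Qstar :: "mdp \<Rightarrow> real \<Rightarrow> nat \<Rightarrow> nat \<Rightarrow> nat \<Rightarrow> real" where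
  "Qstar M \<beta> h s a = Qpi M \<beta> (pistar M \<beta>) h s a"

definition psi :: "real \<Rightarrow> nat \<Rightarrow> real" where
  "psi \<beta> H = (if \<beta> > 0 then 1 / \<beta> else exp (- \<beta> * real H) / \<beta>)"

definition cumrew :: "mdp \<Rightarrow> traj \<Rightarrow> real" where
  "cumrew M \<tau> = (\<Sum>j\<in>{1..length \<tau>}. rew M j (fst (\<tau> ! (j - 1))) (snd (\<tau> ! (j - 1))))"

definition gap :: "mdp \<Rightarrow> real \<Rightarrow> nat \<Rightarrow> nat \<Rightarrow> nat \<Rightarrow> traj \<Rightarrow> real" where
  "gap M \<beta> h s a \<tau> = psi \<beta> (hor M) * exp (\<beta> * cumrew M \<tau>) *
     (exp (\<beta> * Vstar M \<beta> h s) - exp (\<beta> * Qstar M \<beta> h s a))"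

primrec gen_traj :: "mdp \<Rightarrow> policy \<Rightarrow> nat \<Rightarrow> nat \<Rightarrow> nat \<Rightarrow> traj pmf" where
  "gen_traj M \<pi> 0 h s = return_pmf []"
| "gen_traj M \<pi> (Suc n) h s = bind_pmf (trans M h s (\<pi> h s))
     (\<lambda>s'. map_pmf (\<lambda>rest. (s, \<pi> h s) # rest) (gen_traj M \<pi> n (Suc h) s'))"

definition traj_pmf :: "mdp \<Rightarrow> policy \<Rightarrow> traj pmf" where
  "traj_pmf M \<pi> = gen_traj M \<pi> (hor M) 1 (init M)"

text \<open>An algorithm maps the history of previous episodes (oldest first) to the policy
  executed in the next episode. hist_pmf gives the law of the first k episodes.\<close>
primrec hist_pmf :: "mdp \<Rightarrow> (hist \<Rightarrow> policy) \<Rightarrow> nat \<Rightarrow> hist pmf" where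
  "hist_pmf M alg 0 = return_pmf []"
| "hist_pmf M alg (Suc k) = bind_pmf (hist_pmf M alg k)
     (\<lambda>hs. map_pmf (\<lambda>\<tau>. hs @ [\<tau>]) (traj_pmf M (alg hs)))"

definition regret :: "mdp \<Rightarrow> real \<Rightarrow> (hist \<Rightarrow> policy) \<Rightarrow> nat \<Rightarrow> hist \<Rightarrow> real" where
  "regret M \<beta> alg K hs =
     (\<Sum>k<K. Vstar M \<beta> 1 (init M) - Vpi M \<beta> (alg (take k hs)) 1 (init M))"

definition gapsum :: "mdp \<Rightarrow> real \<Rightarrow> nat \<Rightarrow> hist \<Rightarrow> real" where
  "gapsum M \<beta> K hs = (\<Sum>k<K. \<Sum>h\<in>{1..hor M}.
     gap M \<beta> h (fst (hs ! k ! (h - 1))) (snd (hs ! k ! (h - 1))) (take (h - 1) (hs ! k)))"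

definition argmax_sel :: "nat \<Rightarrow> ((nat \<Rightarrow> real) \<Rightarrow> nat) \<Rightarrow> bool" where
  "argmax_sel A sel \<longleftrightarrow> (\<forall>f. sel f < A \<and> (\<forall>a<A. f a \<le> f (sel f)))"

definition visits :: "hist \<Rightarrow> nat \<Rightarrow> nat \<Rightarrow> nat \<Rightarrow> nat" where
  "visits hs h s a = card {i. i < length hs \<and> hs ! i ! (h - 1) = (s, a)}"

definition rsvi_Qh :: "mdp \<Rightarrow> real \<Rightarrow> real \<Rightarrow> nat \<Rightarrow> real \<Rightarrow> hist \<Rightarrow> nat \<Rightarrow> (nat \<Rightarrow> real)
    \<Rightarrow> nat \<Rightarrow> nat \<Rightarrow> real" where
  "rsvi_Qh M \<beta> c K \<delta> hs h Vnext s a =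
    (let n = visits hs h s a;
         Hh = real (hor M - h + 1);
         w = (\<Sum>i\<in>{i. i < length hs \<and> hs ! i ! (h - 1) = (s, a)}.
                exp (\<beta> * (rew M h s a + Vnext (fst (hs ! i ! h))))) / real n;
         b = c * \<bar>exp (\<beta> * Hh) - 1\<bar> *
             sqrt (real (nS M) * ln (2 * real (nS M) * real (nA M) * real (hor M) * real K / \<delta>) / real n);
         G = (if \<beta> > 0 then min (exp (\<beta> * Hh)) (w + b) else max (exp (\<beta> * Hh)) (w - b))
     in if n \<ge> 1 then ln G / \<beta> else Hh)"

text \<open>rsvi_V ... hs m is V_{H+1-m} computed at the start of the episode after history hs.\<close>
primrec rsvi_V :: "mdp \<Rightarrow> real \<Rightarrow> real \<Rightarrow> nat \<Rightarrow> real \<Rightarrow> hist \<Rightarrow> nat \<Rightarrow> nat \<Rightarrow> real" where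
  "rsvi_V M \<beta> c K \<delta> hs 0 = (\<lambda>s. 0)"
| "rsvi_V M \<beta> c K \<delta> hs (Suc m) = (\<lambda>s. Max ((\<lambda>a. rsvi_Qh M \<beta> c K \<delta> hs (hor M - m)
       (rsvi_V M \<beta> c K \<delta> hs m) s a) ` {..<nA M}))"

definition rsvi_Q :: "mdp \<Rightarrow> real \<Rightarrow> real \<Rightarrow> nat \<Rightarrow> real \<Rightarrow> hist \<Rightarrow> nat \<Rightarrow> nat \<Rightarrow> nat \<Rightarrow> real" where
  "rsvi_Q M \<beta> c K \<delta> hs h s a = rsvi_Qh M \<beta> c K \<delta> hs h (rsvi_V M \<beta> c K \<delta> hs (hor M - h)) s a"

definition RSVI2 :: "((nat \<Rightarrow> real) \<Rightarrow> nat) \<Rightarrow> mdp \<Rightarrow> real \<Rightarrow> real \<Rightarrow> nat \<Rightarrow> real \<Rightarrow> hist \<Rightarrow> policy" where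
  "RSVI2 sel M \<beta> c K \<delta> hs = (\<lambda>h s. sel (\<lambda>a. rsvi_Q M \<beta> c K \<delta> hs h s a))"

type_synonym rsq_state = "(nat \<Rightarrow> nat \<Rightarrow> nat \<Rightarrow> real) \<times> (nat \<Rightarrow> nat \<Rightarrow> real) \<times> (nat \<Rightarrow> nat \<Rightarrow> nat \<Rightarrow> nat)"

definition rsq_q0 :: "mdp \<Rightarrow> real \<Rightarrow> nat \<Rightarrow> real" where
  "rsq_q0 M \<beta> h = (if \<beta> > 0 then real (hor M + 1 - h) else 0)"

definition rsq_init :: "mdp \<Rightarrow> real \<Rightarrow> rsq_state" where
  "rsq_init M \<beta> = ((\<lambda>h s a. exp (\<beta> * rsq_q0 M \<beta> h)), (\<lambda>h s. rsq_q0 M \<beta> h), (\<lambda>h s a. 0))"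

definition rsq_step :: "mdp \<Rightarrow> real \<Rightarrow> real \<Rightarrow> nat \<Rightarrow> real \<Rightarrow> rsq_state \<Rightarrow> nat \<Rightarrow> nat \<Rightarrow> nat \<Rightarrow> nat
    \<Rightarrow> rsq_state" where
  "rsq_step M \<beta> c K \<delta> st h s a s' =
    (case st of (G, V, N) \<Rightarrow>
      let t = N h s a + 1;
          \<alpha> = real (hor M + 1) / real (hor M + t);
          w = (1 - \<alpha>) * G h s a + \<alpha> * exp (\<beta> * (rew M h s a + V (Suc h) s'));
          Hh = real (hor M - h + 1);
          b = c * \<bar>exp (\<beta> * Hh) - 1\<bar> *
              sqrt (real (hor M) * ln (2 * real (nS M) * real (nA M) * real (hor M) * real K / \<delta>) / real t);
          g = (if \<beta> > 0 then min (exp (\<beta> * Hh)) (w + \<alpha> * b) else max (exp (\<beta> * Hh)) (w - \<alpha> * b));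
          G' = G(h := (G h)(s := (G h s)(a := g)));
          N' = N(h := (N h)(s := (N h s)(a := t)));
          V' = V(h := (V h)(s := Max ((\<lambda>a'. ln (G' h s a') / \<beta>) ` {..<nA M})))
      in (G', V', N'))"

definition rsq_episode :: "mdp \<Rightarrow> real \<Rightarrow> real \<Rightarrow> nat \<Rightarrow> real \<Rightarrow> traj \<Rightarrow> rsq_state \<Rightarrow> rsq_state" where
  "rsq_episode M \<beta> c K \<delta> \<tau> st0 = fold (\<lambda>h st. rsq_step M \<beta> c K \<delta> st h
       (fst (\<tau> ! (h - 1))) (snd (\<tau> ! (h - 1)))
       (if h < hor M then fst (\<tau> ! h) else init M)) [1..<hor M + 1] st0"

definition RSQ2 :: "((nat \<Rightarrow> real) \<Rightarrow> nat) \<Rightarrow> mdp \<Rightarrow> real \<Rightarrow> real \<Rightarrow> nat \<Rightarrow> real \<Rightarrow> hist \<Rightarrow> policy" where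
  "RSQ2 sel M \<beta> c K \<delta> hs =
    (case fold (rsq_episode M \<beta> c K \<delta>) hs (rsq_init M \<beta>) of (G, V, N) \<Rightarrow>
       (\<lambda>h s. sel (\<lambda>a. ln (G h s a) / \<beta>)))"

definition regret_bound_event :: "mdp \<Rightarrow> real \<Rightarrow> real \<Rightarrow> nat \<Rightarrow> real \<Rightarrow> (hist \<Rightarrow> policy) \<Rightarrow> hist set" where
  "regret_bound_event M \<beta> C K \<delta> alg = {hs. regret M \<beta> alg K hs \<le>
     C * (gapsum M \<beta> K hs + (exp (\<bar>\<beta>\<bar> * real (hor M)) - 1) / \<bar>\<beta>\<bar> * real (hor M) * ln (ln (real K) / \<delta>))}"

end

theory Submission
  imports Defs
begin

text \<open>
  Per episode, the performance difference identity writes exp(beta V*_1) - exp(beta V^pi_1) as the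
  expected sum along the trajectory of exp(beta R(tau_{h-1})) (exp(beta V*_h) - exp(beta Q*_h)),
  and since all values lie in [0, H], V*_1 - V^pi_1 <= psi_beta (exp(beta V*_1) - exp(beta V^pi_1)).
  So the regret of episode k is at most the conditional expectation of its total cascaded gap G_k,
  which lies in [0, B] for B = H (exp(|beta| H) - 1) / |beta|.
  For observations Y_k in [0, 1] and kappa = 1 - 1/e, convexity gives E exp(-Y) <= exp(-kappa E Y),
  so exp(sum_k (kappa E_k Y - Y_k)) is a supermartingale; by Markov's inequality,
  kappa sum_k E_k Y <= sum_k Y_k + ln(2/delta) with probability at least 1 - delta/2.
  For Y_k = G_k / B this gives R(K) <= 2 sum_k G_k + 2 B ln(2/delta), and
  ln(2/delta) <= 13 ln(ln K / delta) for K >= 3.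
  The algorithms enter only through the fact that they execute admissible policies.
\<close>

lemma integrable_pmf_bounded:
  fixes f :: "'a \<Rightarrow> real"
  assumes "\<And>x. \<bar>f x\<bar> \<le> B"
  shows "integrable (measure_pmf p) f"
  by (rule measure_pmf.integrable_const_bound[where B=B]) (use assms in auto)

lemma expectation_pmf_cong:
  fixes f g :: "'a \<Rightarrow> real"
  assumes "\<And>x. x \<in> set_pmf p \<Longrightarrow> f x = g x"
  shows "measure_pmf.expectation p f = measure_pmf.expectation p g"
  by (rule integral_cong_AE) (use assms in \<open>auto simp: AE_measure_pmf_iff\<close>)

lemma expectation_bind_pmf:
  fixes f :: "'b \<Rightarrow> real"
  assumes "\<And>x. \<bar>f x\<bar> \<le> B"
  shows "measure_pmf.expectation (bind_pmf p q) f =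
         measure_pmf.expectation p (\<lambda>x. measure_pmf.expectation (q x) f)"
  unfolding measure_pmf_bind
  by (rule integral_bind[where K="count_space UNIV" and B=B and B'=1])
     (use assms in \<open>auto simp: measure_pmf.emeasure_space_1 measure_pmf_in_subprob_algebra
        intro: measure_pmf.finite_measure\<close>)

lemma expectation_bind_pmf_finite:
  fixes f :: "'b \<Rightarrow> real"
  assumes fin: "finite (set_pmf (bind_pmf p q))"
  shows "measure_pmf.expectation (bind_pmf p q) f =
         measure_pmf.expectation p (\<lambda>x. measure_pmf.expectation (q x) f)"
proof -
  define B where "B = (\<Sum>y\<in>set_pmf (bind_pmf p q). \<bar>f y\<bar>)"
  have f_bounded: "\<bar>f y\<bar> \<le> B" if "y \<in> set_pmf (bind_pmf p q)" for y
    unfolding B_def by (rule member_le_sum[OF that _ fin]) simp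
  define g where "g y = max (- B) (min B (f y))" for y
  have "0 \<le> B" unfolding B_def by (rule sum_nonneg) simp
  then have g_bounded: "\<bar>g y\<bar> \<le> B" for y unfolding g_def by auto
  have g_eq: "g y = f y" if "y \<in> set_pmf (bind_pmf p q)" for y
    using f_bounded[OF that] unfolding g_def by auto
  have "measure_pmf.expectation (bind_pmf p q) f = measure_pmf.expectation (bind_pmf p q) g"
    by (rule expectation_pmf_cong) (use g_eq in auto)
  also have "\<dots> = measure_pmf.expectation p (\<lambda>x. measure_pmf.expectation (q x) g)"
    by (rule expectation_bind_pmf[OF g_bounded])
  also have "\<dots> = measure_pmf.expectation p (\<lambda>x. measure_pmf.expectation (q x) f)"
    by (intro expectation_pmf_cong) (use g_eq in auto)
  finally show ?thesis .
qed

definition entropic_risk :: "'a pmf \<Rightarrow> real \<Rightarrow> ('a \<Rightarrow> real) \<Rightarrow> real" where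
  "entropic_risk p \<beta> f = ln (measure_pmf.expectation p (\<lambda>x. exp (\<beta> * f x))) / \<beta>"

lemma exp_mult_bounds:
  fixes y :: real
  assumes "\<bar>y\<bar> \<le> B"
  shows "exp (- (\<bar>\<beta>\<bar> * B)) \<le> exp (\<beta> * y)" and "\<bar>exp (\<beta> * y)\<bar> \<le> exp (\<bar>\<beta>\<bar> * B)"
proof -
  have "\<bar>\<beta> * y\<bar> \<le> \<bar>\<beta>\<bar> * B"
    unfolding abs_mult by (rule mult_left_mono[OF assms]) simp
  then show "exp (- (\<bar>\<beta>\<bar> * B)) \<le> exp (\<beta> * y)" and "\<bar>exp (\<beta> * y)\<bar> \<le> exp (\<bar>\<beta>\<bar> * B)"
    by simp_all
qed

lemma expectation_exp_pos:
  fixes f :: "'a \<Rightarrow> real"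
  assumes "\<And>x. \<bar>f x\<bar> \<le> B"
  shows "0 < measure_pmf.expectation p (\<lambda>x. exp (\<beta> * f x))"
proof -
  have "exp (- (\<bar>\<beta>\<bar> * B)) \<le> measure_pmf.expectation p (\<lambda>x. exp (\<beta> * f x))"
    using integrable_pmf_bounded[OF exp_mult_bounds(2)[OF assms]] exp_mult_bounds(1)[OF assms]
    by (intro measure_pmf.integral_ge_const) auto
  then show ?thesis using exp_gt_zero order_less_le_trans by blast
qed

lemma exp_entropic_risk:
  fixes f :: "'a \<Rightarrow> real"
  assumes "\<And>x. \<bar>f x\<bar> \<le> B" "\<beta> \<noteq> 0"
  shows "exp (\<beta> * entropic_risk p \<beta> f) = measure_pmf.expectation p (\<lambda>x. exp (\<beta> * f x))"
  unfolding entropic_risk_def using expectation_exp_pos[OF assms(1)] assms(2) by simp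

lemma entropic_risk_mono:
  fixes f g :: "'a \<Rightarrow> real"
  assumes "\<And>x. \<bar>f x\<bar> \<le> B" "\<And>x. \<bar>g x\<bar> \<le> B" "\<And>x. x \<in> set_pmf p \<Longrightarrow> f x \<le> g x"
    and "\<beta> \<noteq> 0"
  shows "entropic_risk p \<beta> f \<le> entropic_risk p \<beta> g"
proof -
  let ?Ef = "measure_pmf.expectation p (\<lambda>x. exp (\<beta> * f x))"
  let ?Eg = "measure_pmf.expectation p (\<lambda>x. exp (\<beta> * g x))"
  have int_f: "integrable (measure_pmf p) (\<lambda>x. exp (\<beta> * f x))"
    by (rule integrable_pmf_bounded) (rule exp_mult_bounds(2)[OF assms(1)])
  have int_g: "integrable (measure_pmf p) (\<lambda>x. exp (\<beta> * g x))"
    by (rule integrable_pmf_bounded) (rule exp_mult_bounds(2)[OF assms(2)])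
  have pos: "0 < ?Ef" "0 < ?Eg" by (rule expectation_exp_pos, fact)+
  show ?thesis
  proof (cases "\<beta> > 0")
    case True
    have "?Ef \<le> ?Eg"
      by (rule integral_mono_AE[OF int_f int_g])
         (use assms(3) True in \<open>auto simp: AE_measure_pmf_iff\<close>)
    then show ?thesis
      unfolding entropic_risk_def using True pos by (simp add: divide_right_mono)
  next
    case False
    then have "\<beta> < 0" using assms(4) by simp
    have "?Eg \<le> ?Ef"
      by (rule integral_mono_AE[OF int_g int_f])
         (use assms(3) \<open>\<beta> < 0\<close> in \<open>auto simp: AE_measure_pmf_iff mult_left_mono_neg\<close>)
    then show ?thesis
      unfolding entropic_risk_def using \<open>\<beta> < 0\<close> pos by (simp add: divide_right_mono_neg)
  qed
qed

lemma entropic_risk_const [simp]: "\<beta> \<noteq> 0 \<Longrightarrow> entropic_risk p \<beta> (\<lambda>_. c) = c"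
  unfolding entropic_risk_def by simp

lemma entropic_risk_bounds:
  fixes f :: "'a \<Rightarrow> real"
  assumes "\<And>x. lo \<le> f x" "\<And>x. f x \<le> hi" "\<beta> \<noteq> 0"
  shows "lo \<le> entropic_risk p \<beta> f" and "entropic_risk p \<beta> f \<le> hi"
proof -
  define B where "B = \<bar>lo\<bar> + \<bar>hi\<bar>"
  have bounded: "\<bar>f x\<bar> \<le> B" "\<bar>lo\<bar> \<le> B" "\<bar>hi\<bar> \<le> B" for x
    using assms(1,2)[of x] unfolding B_def by linarith+
  show "lo \<le> entropic_risk p \<beta> f"
    using entropic_risk_mono[of "\<lambda>_. lo" B f p \<beta>] bounded assms by simp
  show "entropic_risk p \<beta> f \<le> hi"
    using entropic_risk_mono[of f B "\<lambda>_. hi" p \<beta>] bounded assms by simp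
qed

lemma valid_mdp_rew: "valid_mdp M \<Longrightarrow> 0 \<le> rew M h s a \<and> rew M h s a \<le> 1"
  unfolding valid_mdp_def by blast

lemma valid_mdp_trans:
  "valid_mdp M \<Longrightarrow> s < nS M \<Longrightarrow> a < nA M \<Longrightarrow> s' \<in> set_pmf (trans M h s a) \<Longrightarrow> s' < nS M"
  unfolding valid_mdp_def by blast

lemma valid_mdp_actions_nonempty: "valid_mdp M \<Longrightarrow> {..<nA M} \<noteq> {}"
  unfolding valid_mdp_def lessThan_empty_iff by auto

definition bellman_Q :: "mdp \<Rightarrow> real \<Rightarrow> (nat \<Rightarrow> real) \<Rightarrow> nat \<Rightarrow> nat \<Rightarrow> nat \<Rightarrow> real" where
  "bellman_Q M \<beta> V h s a = rew M h s a + entropic_risk (trans M h s a) \<beta> V"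

text \<open>\<open>V_opt M \<beta> n h\<close> is the optimal value of the last \<open>n\<close> steps, starting at step \<open>h\<close>;
  thus \<open>V\<^sup>*\<^sub>h = V_opt M \<beta> (H + 1 - h) h\<close>.\<close>
primrec V_opt :: "mdp \<Rightarrow> real \<Rightarrow> nat \<Rightarrow> nat \<Rightarrow> nat \<Rightarrow> real" where
  "V_opt M \<beta> 0 h s = 0"
| "V_opt M \<beta> (Suc n) h s = Max ((\<lambda>a. bellman_Q M \<beta> (V_opt M \<beta> n (Suc h)) h s a) ` {..<nA M})"

definition V_pol :: "mdp \<Rightarrow> real \<Rightarrow> policy \<Rightarrow> nat \<Rightarrow> nat \<Rightarrow> nat \<Rightarrow> real" where
  "V_pol M \<beta> \<pi> n h s = ln (Wn M \<beta> \<pi> n h s) / \<beta>"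

lemma Vpi_eq_V_pol: "Vpi M \<beta> \<pi> h s = V_pol M \<beta> \<pi> (hor M + 1 - h) h s"
  unfolding Vpi_def V_pol_def ..

lemma bellman_Q_bounds:
  assumes "valid_mdp M" "\<beta> \<noteq> 0" "\<And>x. 0 \<le> V x" "\<And>x. V x \<le> real n"
  shows "0 \<le> bellman_Q M \<beta> V h s a \<and> bellman_Q M \<beta> V h s a \<le> real n + 1"
proof -
  have "0 \<le> entropic_risk (trans M h s a) \<beta> V" "entropic_risk (trans M h s a) \<beta> V \<le> real n"
    using entropic_risk_bounds[of 0 V "real n" \<beta>] assms by auto
  then show ?thesis using valid_mdp_rew[OF assms(1), of h s a] unfolding bellman_Q_def by simp
qed

lemma exp_bellman_Q:
  assumes "\<And>x. \<bar>V x\<bar> \<le> B" "\<beta> \<noteq> 0"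
  shows "exp (\<beta> * bellman_Q M \<beta> V h s a) =
    exp (\<beta> * rew M h s a) * measure_pmf.expectation (trans M h s a) (\<lambda>s'. exp (\<beta> * V s'))"
  unfolding bellman_Q_def distrib_left exp_add exp_entropic_risk[OF assms] ..

lemma bellman_Q_le_V_opt:
  "a < nA M \<Longrightarrow> bellman_Q M \<beta> (V_opt M \<beta> n (Suc h)) h s a \<le> V_opt M \<beta> (Suc n) h s"
  by simp

lemma V_opt_bounds:
  assumes "valid_mdp M" "\<beta> \<noteq> 0"
  shows "0 \<le> V_opt M \<beta> n h s \<and> V_opt M \<beta> n h s \<le> real n"
proof (induction n arbitrary: h s)
  case 0
  then show ?case by simp
next
  case (Suc n)
  have "Max ((\<lambda>a. bellman_Q M \<beta> (V_opt M \<beta> n (Suc h)) h s a) ` {..<nA M})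
      \<in> (\<lambda>a. bellman_Q M \<beta> (V_opt M \<beta> n (Suc h)) h s a) ` {..<nA M}"
    by (rule Max_in) (use valid_mdp_actions_nonempty[OF assms(1)] in auto)
  then obtain a where "V_opt M \<beta> (Suc n) h s = bellman_Q M \<beta> (V_opt M \<beta> n (Suc h)) h s a"
    by auto
  moreover have "0 \<le> bellman_Q M \<beta> (V_opt M \<beta> n (Suc h)) h s a \<and>
      bellman_Q M \<beta> (V_opt M \<beta> n (Suc h)) h s a \<le> real n + 1"
    by (rule bellman_Q_bounds[OF assms]) (use Suc in auto)
  ultimately show ?case by simp
qed

lemma Wn_eq_exp_V_pol_bounded:
  assumes "valid_mdp M" "\<beta> \<noteq> 0"
  shows "Wn M \<beta> \<pi> n h s = exp (\<beta> * V_pol M \<beta> \<pi> n h s) \<and>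
    0 \<le> V_pol M \<beta> \<pi> n h s \<and> V_pol M \<beta> \<pi> n h s \<le> real n"
proof (induction n arbitrary: h s)
  case 0
  then show ?case by (simp add: V_pol_def)
next
  case (Suc n)
  have Wn_next: "Wn M \<beta> \<pi> n (Suc h) = (\<lambda>s'. exp (\<beta> * V_pol M \<beta> \<pi> n (Suc h) s'))"
    using Suc by auto
  have bounded: "\<bar>V_pol M \<beta> \<pi> n (Suc h) x\<bar> \<le> real n" for x using Suc[of "Suc h" x] by auto
  have Wn_Suc: "Wn M \<beta> \<pi> (Suc n) h s = exp (\<beta> * bellman_Q M \<beta> (V_pol M \<beta> \<pi> n (Suc h)) h s (\<pi> h s))"
    unfolding Wn.simps Wn_next exp_bellman_Q[OF bounded assms(2)] ..
  moreover have "V_pol M \<beta> \<pi> (Suc n) h s = bellman_Q M \<beta> (V_pol M \<beta> \<pi> n (Suc h)) h s (\<pi> h s)"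
    unfolding V_pol_def Wn_Suc using assms(2) by simp
  moreover have "0 \<le> bellman_Q M \<beta> (V_pol M \<beta> \<pi> n (Suc h)) h s (\<pi> h s) \<and>
      bellman_Q M \<beta> (V_pol M \<beta> \<pi> n (Suc h)) h s (\<pi> h s) \<le> real n + 1"
    by (rule bellman_Q_bounds[OF assms]) (use Suc in auto)
  ultimately show ?case by simp
qed

lemma Wn_eq_exp_V_pol: "valid_mdp M \<Longrightarrow> \<beta> \<noteq> 0 \<Longrightarrow> Wn M \<beta> \<pi> n h s = exp (\<beta> * V_pol M \<beta> \<pi> n h s)"
  using Wn_eq_exp_V_pol_bounded by blast

lemma V_pol_bounds:
  "valid_mdp M \<Longrightarrow> \<beta> \<noteq> 0 \<Longrightarrow> 0 \<le> V_pol M \<beta> \<pi> n h s \<and> V_pol M \<beta> \<pi> n h s \<le> real n"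
  using Wn_eq_exp_V_pol_bounded by blast

lemma V_pol_Suc:
  assumes "valid_mdp M" "\<beta> \<noteq> 0"
  shows "V_pol M \<beta> \<pi> (Suc n) h s = bellman_Q M \<beta> (V_pol M \<beta> \<pi> n (Suc h)) h s (\<pi> h s)"
proof -
  have bounded: "\<bar>V_pol M \<beta> \<pi> n (Suc h) x\<bar> \<le> real n" for x
    using V_pol_bounds[OF assms] by (simp add: abs_le_iff)
  have "Wn M \<beta> \<pi> (Suc n) h s = exp (\<beta> * bellman_Q M \<beta> (V_pol M \<beta> \<pi> n (Suc h)) h s (\<pi> h s))"
    unfolding Wn.simps Wn_eq_exp_V_pol[OF assms] exp_bellman_Q[OF bounded assms(2)] ..
  then show ?thesis unfolding V_pol_def using assms(2) by simp
qed

lemma V_pol_le_V_opt: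
  assumes "valid_mdp M" "\<beta> \<noteq> 0" "\<pi> \<in> policies M"
  shows "V_pol M \<beta> \<pi> n h s \<le> V_opt M \<beta> n h s"
proof (induction n arbitrary: h s)
  case 0
  then show ?case by (simp add: V_pol_def)
next
  case (Suc n)
  have "\<pi> h s < nA M" using assms(3) unfolding policies_def by auto
  have "\<bar>V_pol M \<beta> \<pi> n (Suc h) x\<bar> \<le> real n" "\<bar>V_opt M \<beta> n (Suc h) x\<bar> \<le> real n" for x
    using V_pol_bounds[OF assms(1,2)] V_opt_bounds[OF assms(1,2)] by (simp_all add: abs_le_iff)
  then have "entropic_risk (trans M h s (\<pi> h s)) \<beta> (V_pol M \<beta> \<pi> n (Suc h))
      \<le> entropic_risk (trans M h s (\<pi> h s)) \<beta> (V_opt M \<beta> n (Suc h))"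
    using Suc assms(2) by (intro entropic_risk_mono) auto
  then have "bellman_Q M \<beta> (V_pol M \<beta> \<pi> n (Suc h)) h s (\<pi> h s)
      \<le> bellman_Q M \<beta> (V_opt M \<beta> n (Suc h)) h s (\<pi> h s)"
    unfolding bellman_Q_def by simp
  also have "\<dots> \<le> V_opt M \<beta> (Suc n) h s" by (rule bellman_Q_le_V_opt) fact
  finally show ?case unfolding V_pol_Suc[OF assms(1,2)] .
qed

definition pi_greedy :: "mdp \<Rightarrow> real \<Rightarrow> policy" where
  "pi_greedy M \<beta> h s = (SOME a. a < nA M \<and>
     bellman_Q M \<beta> (V_opt M \<beta> (hor M - h) (Suc h)) h s a = V_opt M \<beta> (Suc (hor M - h)) h s)"

lemma pi_greedy_attains_V_opt:
  assumes "valid_mdp M"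
  shows "pi_greedy M \<beta> h s < nA M \<and>
     bellman_Q M \<beta> (V_opt M \<beta> (hor M - h) (Suc h)) h s (pi_greedy M \<beta> h s)
       = V_opt M \<beta> (Suc (hor M - h)) h s"
proof -
  let ?f = "\<lambda>a. bellman_Q M \<beta> (V_opt M \<beta> (hor M - h) (Suc h)) h s a"
  have "Max (?f ` {..<nA M}) \<in> ?f ` {..<nA M}"
    using valid_mdp_actions_nonempty[OF assms] by (intro Max_in) auto
  then have "\<exists>a. a < nA M \<and> ?f a = V_opt M \<beta> (Suc (hor M - h)) h s" by auto
  then show ?thesis unfolding pi_greedy_def by (rule someI_ex)
qed

lemma pi_greedy_policy: "valid_mdp M \<Longrightarrow> pi_greedy M \<beta> \<in> policies M"
  using pi_greedy_attains_V_opt unfolding policies_def by blast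

lemma V_pol_pi_greedy:
  assumes "valid_mdp M" "\<beta> \<noteq> 0" "n + h = hor M + 1"
  shows "V_pol M \<beta> (pi_greedy M \<beta>) n h s = V_opt M \<beta> n h s"
  using assms(3)
proof (induction n arbitrary: h s)
  case 0
  then show ?case by (simp add: V_pol_def)
next
  case (Suc n)
  then have "hor M - h = n" "V_pol M \<beta> (pi_greedy M \<beta>) n (Suc h) = V_opt M \<beta> n (Suc h)"
    by auto
  then show ?case
    using pi_greedy_attains_V_opt[OF assms(1), of \<beta> h s] by (simp add: V_pol_Suc[OF assms(1,2)])
qed

lemma Vstar_eq_V_opt:
  assumes "valid_mdp M" "\<beta> \<noteq> 0" "h \<le> hor M + 1"
  shows "Vstar M \<beta> h s = V_opt M \<beta> (hor M + 1 - h) h s"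
  unfolding Vstar_def
proof (rule cSup_eq_maximum)
  show "V_opt M \<beta> (hor M + 1 - h) h s \<in> (\<lambda>\<pi>. Vpi M \<beta> \<pi> h s) ` policies M"
    using V_pol_pi_greedy[OF assms(1,2)] assms(3) pi_greedy_policy[OF assms(1)]
    unfolding Vpi_eq_V_pol by (intro image_eqI[where x="pi_greedy M \<beta>"]) auto
  show "x \<le> V_opt M \<beta> (hor M + 1 - h) h s" if "x \<in> (\<lambda>\<pi>. Vpi M \<beta> \<pi> h s) ` policies M" for x
    using that V_pol_le_V_opt[OF assms(1,2)] unfolding Vpi_eq_V_pol by auto
qed

lemma pistar_optimal:
  assumes "valid_mdp M" "\<beta> \<noteq> 0"
  shows "pistar M \<beta> \<in> policies M \<and>
     (\<forall>h\<in>{1..hor M}. \<forall>s<nS M. Vpi M \<beta> (pistar M \<beta>) h s = Vstar M \<beta> h s)"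
proof -
  have "pi_greedy M \<beta> \<in> policies M \<and>
     (\<forall>h\<in>{1..hor M}. \<forall>s<nS M. Vpi M \<beta> (pi_greedy M \<beta>) h s = Vstar M \<beta> h s)"
    using pi_greedy_policy[OF assms(1)] V_pol_pi_greedy[OF assms] Vstar_eq_V_opt[OF assms]
    unfolding Vpi_eq_V_pol by auto
  then show ?thesis unfolding pistar_def
    by (rule someI[where P="\<lambda>\<pi>. \<pi> \<in> policies M \<and>
      (\<forall>h\<in>{1..hor M}. \<forall>s<nS M. Vpi M \<beta> \<pi> h s = Vstar M \<beta> h s)"])
qed

lemma Qstar_eq_bellman_Q:
  assumes "valid_mdp M" "\<beta> \<noteq> 0" "h \<in> {1..hor M}" "s < nS M" "a < nA M"
  shows "Qstar M \<beta> h s a = bellman_Q M \<beta> (V_opt M \<beta> (hor M - h) (Suc h)) h s a"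
proof -
  let ?V = "V_opt M \<beta> (hor M - h) (Suc h)"
  have "V_pol M \<beta> (pistar M \<beta>) (hor M - h) (Suc h) s' = ?V s'"
    if "s' \<in> set_pmf (trans M h s a)" for s'
  proof (cases "Suc h \<le> hor M")
    case True
    moreover have "s' < nS M" by (rule valid_mdp_trans[OF assms(1,4,5) that])
    ultimately have "Vpi M \<beta> (pistar M \<beta>) (Suc h) s' = Vstar M \<beta> (Suc h) s'"
      using pistar_optimal[OF assms(1,2)] by auto
    then show ?thesis
      using Vstar_eq_V_opt[OF assms(1,2), of "Suc h" s'] True unfolding Vpi_eq_V_pol by simp
  next
    case False
    then have "hor M - h = 0" using assms(3) by auto
    then show ?thesis by (simp add: V_pol_def)
  qed
  then have "measure_pmf.expectation (trans M h s a) (Wn M \<beta> (pistar M \<beta>) (hor M - h) (Suc h))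
     = measure_pmf.expectation (trans M h s a) (\<lambda>s'. exp (\<beta> * ?V s'))"
    by (intro expectation_pmf_cong) (simp add: Wn_eq_exp_V_pol[OF assms(1,2)])
  moreover have "\<bar>?V x\<bar> \<le> real (hor M - h)" for x
    using V_opt_bounds[OF assms(1,2)] by (simp add: abs_le_iff)
  ultimately have "exp (\<beta> * rew M h s a) *
      measure_pmf.expectation (trans M h s a) (Wn M \<beta> (pistar M \<beta>) (hor M - h) (Suc h))
      = exp (\<beta> * bellman_Q M \<beta> ?V h s a)"
    using exp_bellman_Q[OF _ assms(2)] by metis
  then show ?thesis unfolding Qstar_def Qpi_def using assms(2) by simp
qed

lemma gen_traj_support:
  assumes "valid_mdp M" "\<pi> \<in> policies M" "s < nS M"
  shows "finite (set_pmf (gen_traj M \<pi> n h s)) \<and>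
    (\<forall>\<tau>\<in>set_pmf (gen_traj M \<pi> n h s). length \<tau> = n \<and>
       (\<forall>i<n. fst (\<tau> ! i) < nS M \<and> snd (\<tau> ! i) = \<pi> (h + i) (fst (\<tau> ! i))))"
  using assms(3)
proof (induction n arbitrary: h s)
  case 0
  then show ?case by simp
next
  case (Suc n)
  have "\<pi> h s < nA M" using assms(2) unfolding policies_def by auto
  then have next_states: "set_pmf (trans M h s (\<pi> h s)) \<subseteq> {..<nS M}"
    using valid_mdp_trans[OF assms(1) Suc.prems] by auto
  then have IH: "finite (set_pmf (gen_traj M \<pi> n (Suc h) s')) \<and>
    (\<forall>\<tau>\<in>set_pmf (gen_traj M \<pi> n (Suc h) s'). length \<tau> = n \<and>
       (\<forall>i<n. fst (\<tau> ! i) < nS M \<and> snd (\<tau> ! i) = \<pi> (Suc h + i) (fst (\<tau> ! i))))"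
    if "s' \<in> set_pmf (trans M h s (\<pi> h s))" for s'
    using Suc.IH[of s' "Suc h"] that by auto
  have "length \<tau> = Suc n \<and>
      (\<forall>i<Suc n. fst (\<tau> ! i) < nS M \<and> snd (\<tau> ! i) = \<pi> (h + i) (fst (\<tau> ! i)))"
    if "\<tau> \<in> set_pmf (gen_traj M \<pi> (Suc n) h s)" for \<tau>
  proof -
    from that obtain s' rest where s': "s' \<in> set_pmf (trans M h s (\<pi> h s))"
      and rest: "rest \<in> set_pmf (gen_traj M \<pi> n (Suc h) s')" and \<tau>: "\<tau> = (s, \<pi> h s) # rest"
      by auto
    have "fst (\<tau> ! i) < nS M \<and> snd (\<tau> ! i) = \<pi> (h + i) (fst (\<tau> ! i))" if "i < Suc n" for i
      using IH[OF s'] rest Suc.prems that unfolding \<tau> by (cases i) auto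
    moreover have "length \<tau> = Suc n" using IH[OF s'] rest unfolding \<tau> by auto
    ultimately show ?thesis by blast
  qed
  moreover have "finite (set_pmf (gen_traj M \<pi> (Suc n) h s))"
    using finite_subset[OF next_states] IH by auto
  ultimately show ?case by blast
qed

definition exp_V_opt :: "mdp \<Rightarrow> real \<Rightarrow> nat \<Rightarrow> nat \<Rightarrow> real" where
  "exp_V_opt M \<beta> h s = exp (\<beta> * V_opt M \<beta> (hor M + 1 - h) h s)"

definition exp_Q_opt :: "mdp \<Rightarrow> real \<Rightarrow> nat \<Rightarrow> nat \<Rightarrow> nat \<Rightarrow> real" where
  "exp_Q_opt M \<beta> h s a = exp (\<beta> * bellman_Q M \<beta> (V_opt M \<beta> (hor M - h) (Suc h)) h s a)"

text \<open>The sum of the cascaded gaps along a trajectory, without the factor \<open>psi\<close>, in Horner form.\<close>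
primrec exp_gap_sum :: "mdp \<Rightarrow> real \<Rightarrow> nat \<Rightarrow> traj \<Rightarrow> real" where
  "exp_gap_sum M \<beta> h [] = 0"
| "exp_gap_sum M \<beta> h (x # xs) = (exp_V_opt M \<beta> h (fst x) - exp_Q_opt M \<beta> h (fst x) (snd x)) +
     exp (\<beta> * rew M h (fst x) (snd x)) * exp_gap_sum M \<beta> (Suc h) xs"

lemma exp_gap_sum_unroll:
  "exp_gap_sum M \<beta> h \<tau> = (\<Sum>j<length \<tau>.
     exp (\<beta> * (\<Sum>i<j. rew M (h + i) (fst (\<tau> ! i)) (snd (\<tau> ! i)))) *
     (exp_V_opt M \<beta> (h + j) (fst (\<tau> ! j)) - exp_Q_opt M \<beta> (h + j) (fst (\<tau> ! j)) (snd (\<tau> ! j))))"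
proof (induction \<tau> arbitrary: h)
  case Nil
  then show ?case by simp
next
  case (Cons x xs)
  have "(\<Sum>i<Suc j. rew M (h + i) (fst ((x # xs) ! i)) (snd ((x # xs) ! i)))
      = rew M h (fst x) (snd x) + (\<Sum>i<j. rew M (Suc h + i) (fst (xs ! i)) (snd (xs ! i)))" for j
    by (subst sum.lessThan_Suc_shift) simp
  then show ?case
    unfolding length_Cons sum.lessThan_Suc_shift exp_gap_sum.simps Cons[of "Suc h"]
    by (simp add: sum_distrib_left distrib_left exp_add mult.assoc)
qed

lemma exp_V_opt_bounded:
  "valid_mdp M \<Longrightarrow> \<beta> \<noteq> 0 \<Longrightarrow> \<bar>exp_V_opt M \<beta> h s\<bar> \<le> exp (\<bar>\<beta>\<bar> * real (hor M + 1 - h))"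
  unfolding exp_V_opt_def using V_opt_bounds by (intro exp_mult_bounds(2)) (simp add: abs_le_iff)

lemma Wn_bounded: "valid_mdp M \<Longrightarrow> \<beta> \<noteq> 0 \<Longrightarrow> \<bar>Wn M \<beta> \<pi> n h s\<bar> \<le> exp (\<bar>\<beta>\<bar> * real n)"
  unfolding Wn_eq_exp_V_pol using V_pol_bounds by (intro exp_mult_bounds(2)) (simp add: abs_le_iff)

lemma exp_Q_opt_eq_expectation:
  assumes "valid_mdp M" "\<beta> \<noteq> 0"
  shows "exp_Q_opt M \<beta> h s a =
    exp (\<beta> * rew M h s a) * measure_pmf.expectation (trans M h s a) (exp_V_opt M \<beta> (Suc h))"
proof -
  have bounded: "\<bar>V_opt M \<beta> (hor M - h) (Suc h) x\<bar> \<le> real (hor M - h)" for x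
    using V_opt_bounds[OF assms] by (simp add: abs_le_iff)
  show ?thesis
    unfolding exp_Q_opt_def exp_V_opt_def by (simp add: exp_bellman_Q[OF bounded assms(2)])
qed

lemma performance_difference:
  assumes "valid_mdp M" "\<beta> \<noteq> 0" "\<pi> \<in> policies M" "s < nS M" "n + h = hor M + 1"
  shows "exp_V_opt M \<beta> h s - Wn M \<beta> \<pi> n h s =
    measure_pmf.expectation (gen_traj M \<pi> n h s) (exp_gap_sum M \<beta> h)"
  using assms(4,5)
proof (induction n arbitrary: h s)
  case 0
  then show ?case by (simp add: exp_V_opt_def)
next
  case (Suc n)
  define a where "a = \<pi> h s"
  define p where "p = trans M h s a"
  define D where "D = exp_V_opt M \<beta> h s - exp_Q_opt M \<beta> h s a"
  define e where "e = exp (\<beta> * rew M h s a)"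
  have "a < nA M" using assms(3) unfolding policies_def a_def by auto
  then have next_state: "s' < nS M" if "s' \<in> set_pmf p" for s'
    using valid_mdp_trans[OF assms(1) Suc.prems(1)] that unfolding p_def by auto
  have continuation: "measure_pmf.expectation (gen_traj M \<pi> n (Suc h) s')
      (\<lambda>rest. exp_gap_sum M \<beta> h ((s, a) # rest))
      = D + e * (exp_V_opt M \<beta> (Suc h) s' - Wn M \<beta> \<pi> n (Suc h) s')" if "s' \<in> set_pmf p" for s'
  proof -
    have "integrable (measure_pmf (gen_traj M \<pi> n (Suc h) s')) (exp_gap_sum M \<beta> (Suc h))"
      using gen_traj_support[OF assms(1,3) next_state[OF that]]
      by (blast intro: integrable_measure_pmf_finite)
    then show ?thesis
      using Suc.IH[OF next_state[OF that]] Suc.prems(2) by (simp add: D_def e_def)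
  qed
  have integrable: "integrable (measure_pmf p) (exp_V_opt M \<beta> (Suc h))"
      "integrable (measure_pmf p) (Wn M \<beta> \<pi> n (Suc h))"
    using exp_V_opt_bounded[OF assms(1,2)] Wn_bounded[OF assms(1,2)]
    by (blast intro: integrable_pmf_bounded)+
  have "measure_pmf.expectation (gen_traj M \<pi> (Suc n) h s) (exp_gap_sum M \<beta> h)
     = measure_pmf.expectation p (\<lambda>s'. measure_pmf.expectation (gen_traj M \<pi> n (Suc h) s')
         (\<lambda>rest. exp_gap_sum M \<beta> h ((s, a) # rest)))"
    using gen_traj_support[OF assms(1,3) Suc.prems(1), of "Suc n" h]
    by (simp add: expectation_bind_pmf_finite p_def a_def)
  also have "\<dots> = measure_pmf.expectation p
      (\<lambda>s'. D + e * (exp_V_opt M \<beta> (Suc h) s' - Wn M \<beta> \<pi> n (Suc h) s'))"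
    by (rule expectation_pmf_cong) (rule continuation)
  also have "\<dots> = D + e * measure_pmf.expectation p (exp_V_opt M \<beta> (Suc h))
      - e * measure_pmf.expectation p (Wn M \<beta> \<pi> n (Suc h))"
    using integrable by (simp add: algebra_simps)
  also have "\<dots> = exp_V_opt M \<beta> h s - Wn M \<beta> \<pi> (Suc n) h s"
    unfolding D_def exp_Q_opt_eq_expectation[OF assms(1,2)] by (simp add: e_def p_def a_def)
  finally show ?case by simp
qed

lemma diff_le_psi_exp_diff:
  fixes v w \<beta> :: real
  assumes "w \<le> v" "0 \<le> w" "v \<le> real H" "\<beta> \<noteq> 0"
  shows "v - w \<le> psi \<beta> H * (exp (\<beta> * v) - exp (\<beta> * w))"
proof (cases "\<beta> > 0")
  case True
  have "\<beta> * (v - w) \<le> exp (\<beta> * (v - w)) - 1"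
    using exp_ge_add_one_self[of "\<beta> * (v - w)"] by linarith
  also have "\<dots> \<le> exp (\<beta> * w) * (exp (\<beta> * (v - w)) - 1)"
    using mult_right_mono[of 1 "exp (\<beta> * w)" "exp (\<beta> * (v - w)) - 1"] True assms(1,2) by simp
  also have "\<dots> = exp (\<beta> * v) - exp (\<beta> * w)"
    by (simp add: algebra_simps flip: exp_add)
  finally show ?thesis
    unfolding psi_def using True by (simp add: field_simps)
next
  case False
  define b where "b = - \<beta>"
  have "0 < b" using False assms(4) unfolding b_def by simp
  have "b * (v - w) \<le> exp (b * (v - w)) - 1"
    using exp_ge_add_one_self[of "b * (v - w)"] by linarith
  also have "\<dots> \<le> exp (b * real H) * exp (- (b * v)) * (exp (b * (v - w)) - 1)"
  proof -
    have "1 \<le> exp (b * real H) * exp (- (b * v))"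
      unfolding exp_add[symmetric] using \<open>0 < b\<close> assms(3) by (simp add: mult_left_mono)
    then show ?thesis
      using mult_right_mono[of 1 _ "exp (b * (v - w)) - 1"] \<open>0 < b\<close> assms(1) by simp
  qed
  also have "\<dots> = exp (b * real H) * (exp (- (b * w)) - exp (- (b * v)))"
    by (simp add: algebra_simps flip: exp_add)
  finally show ?thesis
    unfolding psi_def b_def using False \<open>0 < b\<close> unfolding b_def by (simp add: field_simps)
qed

lemma psi_exp_gap_bounds:
  fixes c q v \<beta> :: real
  assumes "0 \<le> c" "0 \<le> q" "q \<le> v" "c + v \<le> real H" "\<beta> \<noteq> 0"
  shows "0 \<le> psi \<beta> H * exp (\<beta> * c) * (exp (\<beta> * v) - exp (\<beta> * q))"
    and "psi \<beta> H * exp (\<beta> * c) * (exp (\<beta> * v) - exp (\<beta> * q)) \<le> (exp (\<bar>\<beta>\<bar> * real H) - 1) / \<bar>\<beta>\<bar>"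
proof -
  define T where "T = psi \<beta> H * exp (\<beta> * c) * (exp (\<beta> * v) - exp (\<beta> * q))"
  have "0 \<le> T \<and> T \<le> (exp (\<bar>\<beta>\<bar> * real H) - 1) / \<bar>\<beta>\<bar>"
  proof (cases "\<beta> > 0")
    case True
    have "exp (\<beta> * q) \<le> exp (\<beta> * v)" "1 \<le> exp (\<beta> * q)"
      using True assms(2,3) by (simp_all add: mult_left_mono)
    then have "exp (\<beta> * c) * (exp (\<beta> * v) - exp (\<beta> * q)) \<le> exp (\<beta> * c) * (exp (\<beta> * v) - 1)"
      by (simp add: mult_left_mono)
    also have "\<dots> = exp (\<beta> * (c + v)) - exp (\<beta> * c)"
      by (simp add: algebra_simps flip: exp_add)
    also have "\<dots> \<le> exp (\<beta> * real H) - 1"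
    proof -
      have "\<beta> * (c + v) \<le> \<beta> * real H" using True assms(4) by (intro mult_left_mono) auto
      then have "exp (\<beta> * (c + v)) \<le> exp (\<beta> * real H)" by (simp only: exp_le_cancel_iff)
      moreover have "1 \<le> exp (\<beta> * c)" using True assms(1) by simp
      ultimately show ?thesis by linarith
    qed
    finally show ?thesis
      using True \<open>exp (\<beta> * q) \<le> exp (\<beta> * v)\<close> unfolding T_def psi_def
      by (simp add: divide_right_mono mult.assoc)
  next
    case False
    define b where "b = - \<beta>"
    have "0 < b" using False assms(5) unfolding b_def by simp
    have exps: "exp (- (b * v)) \<le> exp (- (b * q))" "exp (- (b * q)) \<le> 1" "exp (- (b * c)) \<le> 1"
      "exp (- (b * real H)) \<le> exp (- (b * v))"
      using \<open>0 < b\<close> assms(1-4) by (simp_all add: mult_left_mono)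
    have "exp (- (b * c)) * (exp (- (b * q)) - exp (- (b * v))) \<le> 1 * (1 - exp (- (b * real H)))"
      by (rule mult_mono) (use exps exp_ge_zero[of "- (b * c)"] in linarith)+
    then have "exp (b * real H) * (exp (- (b * c)) * (exp (- (b * q)) - exp (- (b * v))))
        \<le> exp (b * real H) * (1 - exp (- (b * real H)))"
      by (intro mult_left_mono) simp_all
    also have "\<dots> = exp (b * real H) - 1"
      by (simp add: algebra_simps flip: exp_add)
    finally have "exp (b * real H) * (exp (- (b * c)) * (exp (- (b * q)) - exp (- (b * v))))
        \<le> exp (b * real H) - 1" .
    moreover have
      "T = exp (b * real H) * (exp (- (b * c)) * (exp (- (b * q)) - exp (- (b * v)))) / b"
      unfolding T_def psi_def b_def using False \<open>0 < b\<close> unfolding b_def by (simp add: field_simps)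
    moreover have "\<bar>\<beta>\<bar> = b" using False unfolding b_def by simp
    ultimately show ?thesis
      using \<open>0 < b\<close> exps(1) by (simp add: divide_right_mono)
  qed
  then show "0 \<le> T" and "T \<le> (exp (\<bar>\<beta>\<bar> * real H) - 1) / \<bar>\<beta>\<bar>" by auto
qed

lemma cumrew_bounds: "valid_mdp M \<Longrightarrow> 0 \<le> cumrew M \<tau> \<and> cumrew M \<tau> \<le> real (length \<tau>)"
  using sum_bounded_above[of "{1..length \<tau>}"
      "\<lambda>j. rew M j (fst (\<tau> ! (j - 1))) (snd (\<tau> ! (j - 1)))" 1]
  unfolding cumrew_def by (auto intro: sum_nonneg simp: valid_mdp_rew)

lemma cumrew_take:
  assumes "j \<le> length \<tau>"
  shows "cumrew M (take j \<tau>) = (\<Sum>i<j. rew M (Suc i) (fst (\<tau> ! i)) (snd (\<tau> ! i)))"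
proof -
  have "cumrew M (take j \<tau>) = (\<Sum>i<j. rew M (Suc i) (fst (take j \<tau> ! i)) (snd (take j \<tau> ! i)))"
    using assms unfolding cumrew_def by (simp add: sum.atLeast1_atMost_eq)
  also have "\<dots> = (\<Sum>i<j. rew M (Suc i) (fst (\<tau> ! i)) (snd (\<tau> ! i)))"
    by (rule sum.cong) auto
  finally show ?thesis .
qed

lemma gap_eq_exp_gap:
  assumes "valid_mdp M" "\<beta> \<noteq> 0" "h \<in> {1..hor M}" "s < nS M" "a < nA M"
  shows "gap M \<beta> h s a \<tau> =
    psi \<beta> (hor M) * exp (\<beta> * cumrew M \<tau>) * (exp_V_opt M \<beta> h s - exp_Q_opt M \<beta> h s a)"
  using assms(3) unfolding gap_def exp_V_opt_def exp_Q_opt_def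
  by (simp add: Vstar_eq_V_opt[OF assms(1,2)] Qstar_eq_bellman_Q[OF assms])

lemma gap_bounds:
  assumes "valid_mdp M" "\<beta> \<noteq> 0" "h \<in> {1..hor M}" "s < nS M" "a < nA M" "length \<tau> < h"
  shows "0 \<le> gap M \<beta> h s a \<tau> \<and> gap M \<beta> h s a \<tau> \<le> (exp (\<bar>\<beta>\<bar> * real (hor M)) - 1) / \<bar>\<beta>\<bar>"
proof -
  define v where "v = V_opt M \<beta> (hor M + 1 - h) h s"
  define q where "q = bellman_Q M \<beta> (V_opt M \<beta> (hor M - h) (Suc h)) h s a"
  have "hor M + 1 - h = Suc (hor M - h)" using assms(3) by (simp add: Suc_diff_le)
  then have "q \<le> v" unfolding q_def v_def using bellman_Q_le_V_opt[OF assms(5)] by simp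
  moreover have "0 \<le> q" unfolding q_def
    using bellman_Q_bounds[OF assms(1,2)] V_opt_bounds[OF assms(1,2)] by blast
  moreover have "cumrew M \<tau> + v \<le> real (hor M)"
    using cumrew_bounds[OF assms(1), of \<tau>] V_opt_bounds[OF assms(1,2), of "hor M + 1 - h" h s]
      assms(3,6) unfolding v_def by auto
  moreover have "gap M \<beta> h s a \<tau> =
      psi \<beta> (hor M) * exp (\<beta> * cumrew M \<tau>) * (exp (\<beta> * v) - exp (\<beta> * q))"
    unfolding gap_eq_exp_gap[OF assms(1-5)] exp_V_opt_def exp_Q_opt_def v_def q_def ..
  ultimately show ?thesis
    using psi_exp_gap_bounds[OF _ _ _ _ assms(2)] cumrew_bounds[OF assms(1)] by simp
qed

definition episode_gap :: "mdp \<Rightarrow> real \<Rightarrow> traj \<Rightarrow> real" where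
  "episode_gap M \<beta> \<tau> =
    (\<Sum>h\<in>{1..hor M}. gap M \<beta> h (fst (\<tau> ! (h - 1))) (snd (\<tau> ! (h - 1))) (take (h - 1) \<tau>))"

definition gap_bound :: "mdp \<Rightarrow> real \<Rightarrow> real" where
  "gap_bound M \<beta> = real (hor M) * ((exp (\<bar>\<beta>\<bar> * real (hor M)) - 1) / \<bar>\<beta>\<bar>)"

lemma gap_bound_pos: "valid_mdp M \<Longrightarrow> \<beta> \<noteq> 0 \<Longrightarrow> 0 < gap_bound M \<beta>"
  unfolding gap_bound_def valid_mdp_def by auto

lemma traj_pmf_support:
  assumes "valid_mdp M" "\<pi> \<in> policies M"
  shows "\<tau> \<in> set_pmf (traj_pmf M \<pi>) \<Longrightarrow> length \<tau> = hor M"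
    and "\<tau> \<in> set_pmf (traj_pmf M \<pi>) \<Longrightarrow> i < hor M \<Longrightarrow> fst (\<tau> ! i) < nS M \<and> snd (\<tau> ! i) < nA M"
proof -
  have "init M < nS M" using assms(1) unfolding valid_mdp_def by auto
  note support = gen_traj_support[OF assms this, of "hor M" 1, folded traj_pmf_def]
  show "length \<tau> = hor M" if "\<tau> \<in> set_pmf (traj_pmf M \<pi>)" using support that by blast
  show "fst (\<tau> ! i) < nS M \<and> snd (\<tau> ! i) < nA M" if "\<tau> \<in> set_pmf (traj_pmf M \<pi>)" "i < hor M"
    using support that assms(2) unfolding policies_def by auto
qed

lemma episode_gap_on_support:
  assumes "valid_mdp M" "\<beta> \<noteq> 0" "\<pi> \<in> policies M" "\<tau> \<in> set_pmf (traj_pmf M \<pi>)"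
  shows "episode_gap M \<beta> \<tau> = psi \<beta> (hor M) * exp_gap_sum M \<beta> 1 \<tau>"
    and "0 \<le> episode_gap M \<beta> \<tau>" and "episode_gap M \<beta> \<tau> \<le> gap_bound M \<beta>"
proof -
  let ?H = "hor M"
  let ?g = "\<lambda>i. gap M \<beta> (Suc i) (fst (\<tau> ! i)) (snd (\<tau> ! i)) (take i \<tau>)"
  note length = traj_pmf_support(1)[OF assms(1,3,4)]
  have shift: "episode_gap M \<beta> \<tau> = (\<Sum>i<?H. ?g i)"
    unfolding episode_gap_def by (simp add: sum.atLeast1_atMost_eq)
  have step: "Suc i \<in> {1..?H}" "fst (\<tau> ! i) < nS M" "snd (\<tau> ! i) < nA M" "length (take i \<tau>) < Suc i"
    if "i < ?H" for i
    using that traj_pmf_support(2)[OF assms(1,3,4) that] by auto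
  have "?g i = psi \<beta> ?H * (exp (\<beta> * (\<Sum>i'<i. rew M (1 + i') (fst (\<tau> ! i')) (snd (\<tau> ! i')))) *
      (exp_V_opt M \<beta> (1 + i) (fst (\<tau> ! i)) - exp_Q_opt M \<beta> (1 + i) (fst (\<tau> ! i)) (snd (\<tau> ! i))))"
    if "i < ?H" for i
  proof -
    have "cumrew M (take i \<tau>) = (\<Sum>i'<i. rew M (Suc i') (fst (\<tau> ! i')) (snd (\<tau> ! i')))"
      using that length by (intro cumrew_take) simp
    then show ?thesis unfolding gap_eq_exp_gap[OF assms(1,2) step(1-3)[OF that]] by simp
  qed
  then show "episode_gap M \<beta> \<tau> = psi \<beta> ?H * exp_gap_sum M \<beta> 1 \<tau>"
    unfolding shift exp_gap_sum_unroll length sum_distrib_left by (intro sum.cong) simp_all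
  have g_bounds: "0 \<le> ?g i \<and> ?g i \<le> (exp (\<bar>\<beta>\<bar> * real ?H) - 1) / \<bar>\<beta>\<bar>" if "i < ?H" for i
    by (rule gap_bounds[OF assms(1,2) step[OF that]])
  then show "0 \<le> episode_gap M \<beta> \<tau>"
    unfolding shift by (intro sum_nonneg) blast
  show "episode_gap M \<beta> \<tau> \<le> gap_bound M \<beta>"
  proof -
    have "(\<Sum>i<?H. ?g i) \<le> real (card {..<?H}) * ((exp (\<bar>\<beta>\<bar> * real ?H) - 1) / \<bar>\<beta>\<bar>)"
      by (rule sum_bounded_above) (use g_bounds in blast)
    then show ?thesis unfolding shift gap_bound_def by simp
  qed
qed

lemma episode_regret_le_expected_gap:
  assumes "valid_mdp M" "\<beta> \<noteq> 0" "\<pi> \<in> policies M"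
  shows "Vstar M \<beta> 1 (init M) - Vpi M \<beta> \<pi> 1 (init M)
    \<le> measure_pmf.expectation (traj_pmf M \<pi>) (episode_gap M \<beta>)"
proof -
  let ?H = "hor M"
  define v where "v = V_opt M \<beta> ?H 1 (init M)"
  define w where "w = V_pol M \<beta> \<pi> ?H 1 (init M)"
  have "init M < nS M" using assms(1) unfolding valid_mdp_def by auto
  have "w \<le> v" unfolding v_def w_def by (rule V_pol_le_V_opt[OF assms])
  moreover have "0 \<le> w" using V_pol_bounds[OF assms(1,2)] unfolding w_def by blast
  moreover have "v \<le> real ?H" using V_opt_bounds[OF assms(1,2)] unfolding v_def by blast
  moreover have "Vstar M \<beta> 1 (init M) - Vpi M \<beta> \<pi> 1 (init M) = v - w"
    unfolding v_def w_def Vpi_eq_V_pol using Vstar_eq_V_opt[OF assms(1,2), of 1] by simp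
  ultimately have "Vstar M \<beta> 1 (init M) - Vpi M \<beta> \<pi> 1 (init M)
      \<le> psi \<beta> ?H * (exp (\<beta> * v) - exp (\<beta> * w))"
    using diff_le_psi_exp_diff[OF _ _ _ assms(2)] by simp
  also have "exp (\<beta> * v) - exp (\<beta> * w) = exp_V_opt M \<beta> 1 (init M) - Wn M \<beta> \<pi> ?H 1 (init M)"
    unfolding v_def w_def exp_V_opt_def Wn_eq_exp_V_pol[OF assms(1,2)] by simp
  also have "\<dots> = measure_pmf.expectation (traj_pmf M \<pi>) (exp_gap_sum M \<beta> 1)"
    unfolding traj_pmf_def by (rule performance_difference[OF assms \<open>init M < nS M\<close>]) simp
  also have "psi \<beta> ?H * \<dots> =
      measure_pmf.expectation (traj_pmf M \<pi>) (\<lambda>\<tau>. psi \<beta> ?H * exp_gap_sum M \<beta> 1 \<tau>)"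
    by simp
  also have "\<dots> = measure_pmf.expectation (traj_pmf M \<pi>) (episode_gap M \<beta>)"
    by (rule expectation_pmf_cong) (simp add: episode_gap_on_support(1)[OF assms])
  finally show ?thesis .
qed

text \<open>Minus the slope of the chord of the convex function \<open>exp (- y)\<close> over \<open>[0, 1]\<close>.\<close>
definition kappa :: real where
  "kappa = 1 - exp (- 1)"

lemma kappa_bounds: "1 / 2 \<le> kappa" "kappa \<le> 1"
proof -
  have "2 \<le> exp (1::real)" using exp_ge_add_one_self[of 1] by simp
  then have "exp (- 1) \<le> (1 / 2 :: real)" by (simp add: exp_minus field_simps)
  then show "1 / 2 \<le> kappa" unfolding kappa_def by simp
  show "kappa \<le> 1" unfolding kappa_def by simp
qed

lemma exp_neg_le_chord:
  fixes y :: real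
  assumes "0 \<le> y" "y \<le> 1"
  shows "exp (- y) \<le> 1 - kappa * y"
proof -
  have "exp ((1 - y) *\<^sub>R 0 + y *\<^sub>R (- 1)) \<le> (1 - y) * exp 0 + y * exp (- 1)"
    by (rule convex_onD[OF exp_convex]) (use assms in auto)
  then show ?thesis unfolding kappa_def by (simp add: algebra_simps)
qed

lemma exp_kappa_mean_mult_mgf_le_1:
  fixes Z :: "'a \<Rightarrow> real"
  assumes "\<And>x. 0 \<le> Z x" "\<And>x. Z x \<le> 1"
  shows "exp (kappa * measure_pmf.expectation p Z) * measure_pmf.expectation p (\<lambda>x. exp (- Z x))
    \<le> 1"
proof -
  let ?m = "measure_pmf.expectation p Z"
  have int_Z: "integrable (measure_pmf p) Z"
    by (rule integrable_pmf_bounded[where B=1]) (use assms in \<open>simp add: abs_le_iff\<close>)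
  have "integrable (measure_pmf p) (\<lambda>x. exp (- Z x))"
    by (rule integrable_pmf_bounded[where B=1]) (use assms in simp)
  then have "measure_pmf.expectation p (\<lambda>x. exp (- Z x))
      \<le> measure_pmf.expectation p (\<lambda>x. 1 - kappa * Z x)"
    using int_Z exp_neg_le_chord assms by (intro integral_mono) auto
  also have "\<dots> = 1 - kappa * ?m"
    using int_Z by simp
  also have "\<dots> \<le> exp (- (kappa * ?m))"
    using exp_ge_add_one_self[of "- (kappa * ?m)"] by simp
  finally have "exp (kappa * ?m) * measure_pmf.expectation p (\<lambda>x. exp (- Z x))
      \<le> exp (kappa * ?m) * exp (- (kappa * ?m))"
    by (simp add: mult_left_mono)
  then show ?thesis by (simp flip: exp_add)
qed

lemma hist_pmf_support:
  "hs \<in> set_pmf (hist_pmf M alg K) \<Longrightarrow>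
    length hs = K \<and> (\<forall>k<K. hs ! k \<in> set_pmf (traj_pmf M (alg (take k hs))))"
proof (induction K arbitrary: hs)
  case 0
  then show ?case by simp
next
  case (Suc K)
  then obtain hs' \<tau> where hs': "hs' \<in> set_pmf (hist_pmf M alg K)"
    and \<tau>: "\<tau> \<in> set_pmf (traj_pmf M (alg hs'))" and hs: "hs = hs' @ [\<tau>]"
    by auto
  have "length hs' = K" using Suc.IH[OF hs'] by simp
  then show ?case
    using Suc.IH[OF hs'] \<tau> unfolding hs by (auto simp: nth_append less_Suc_eq)
qed

text \<open>The exponent of the supermartingale behind Freedman's inequality for observations
  \<open>Y (hs ! k) \<in> [0, 1]\<close> of the successive episodes.\<close>
definition mean_excess :: "mdp \<Rightarrow> (hist \<Rightarrow> policy) \<Rightarrow> (traj \<Rightarrow> real) \<Rightarrow> nat \<Rightarrow> hist \<Rightarrow> real" where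
  "mean_excess M alg Y K hs =
    (\<Sum>k<K. kappa * measure_pmf.expectation (traj_pmf M (alg (take k hs))) Y - Y (hs ! k))"

lemma mean_excess_abs_le:
  assumes "\<And>\<tau>. 0 \<le> Y \<tau>" "\<And>\<tau>. Y \<tau> \<le> 1"
  shows "\<bar>mean_excess M alg Y K hs\<bar> \<le> real K"
proof -
  have "\<bar>kappa * measure_pmf.expectation p Y - Y \<tau>\<bar> \<le> 1" for p \<tau>
  proof -
    have "0 \<le> measure_pmf.expectation p Y" by (rule integral_nonneg_AE) (use assms in simp)
    moreover have "measure_pmf.expectation p Y \<le> 1"
      by (rule measure_pmf.integral_le_const[OF integrable_pmf_bounded[where B=1]])
         (use assms in \<open>simp_all add: abs_le_iff\<close>)
    ultimately have "0 \<le> kappa * measure_pmf.expectation p Y"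
      "kappa * measure_pmf.expectation p Y \<le> 1"
      using kappa_bounds mult_mono[of kappa 1 "measure_pmf.expectation p Y" 1] by auto
    then show ?thesis using assms[of \<tau>] by linarith
  qed
  then have "\<bar>mean_excess M alg Y K hs\<bar> \<le> (\<Sum>k<K. 1)"
    unfolding mean_excess_def by (intro order_trans[OF sum_abs] sum_mono)
  then show ?thesis by simp
qed

lemma mean_excess_snoc:
  assumes "length hs = K"
  shows "mean_excess M alg Y (Suc K) (hs @ [\<tau>]) =
    mean_excess M alg Y K hs + kappa * measure_pmf.expectation (traj_pmf M (alg hs)) Y - Y \<tau>"
proof -
  have "(\<Sum>k<K. kappa * measure_pmf.expectation (traj_pmf M (alg (take k (hs @ [\<tau>])))) Y
      - Y ((hs @ [\<tau>]) ! k))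
      = mean_excess M alg Y K hs"
    unfolding mean_excess_def by (rule sum.cong) (use assms in \<open>auto simp: nth_append\<close>)
  then show ?thesis using assms by (simp add: mean_excess_def nth_append)
qed

lemma expectation_exp_mean_excess_le_1:
  assumes "\<And>\<tau>. 0 \<le> Y \<tau>" "\<And>\<tau>. Y \<tau> \<le> 1"
  shows "measure_pmf.expectation (hist_pmf M alg K) (\<lambda>hs. exp (mean_excess M alg Y K hs)) \<le> 1"
proof (induction K)
  case 0
  then show ?case by (simp add: mean_excess_def)
next
  case (Suc K)
  let ?S = "\<lambda>K hs. exp (mean_excess M alg Y K hs)"
  define g where "g hs = ?S K hs * (exp (kappa * measure_pmf.expectation (traj_pmf M (alg hs)) Y) *
      measure_pmf.expectation (traj_pmf M (alg hs)) (\<lambda>\<tau>. exp (- Y \<tau>)))" for hs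
  have S_le: "?S n hs \<le> exp (real n)" for n hs
    using abs_le_D1[OF mean_excess_abs_le[of Y, OF assms]] by simp
  then have S_bounded: "\<bar>?S n hs\<bar> \<le> exp (real n)" for n hs by simp
  have g_le: "g hs \<le> ?S K hs" for hs
    using exp_kappa_mean_mult_mgf_le_1[of Y, OF assms] unfolding g_def by (simp add: mult_left_le)
  have "0 \<le> g hs" for hs
    unfolding g_def by (simp add: integral_nonneg_AE)
  then have g_bounded: "\<bar>g hs\<bar> \<le> exp (real K)" for hs
    using order_trans[OF g_le S_le] by (simp add: abs_of_nonneg)
  have continuation:
    "measure_pmf.expectation (traj_pmf M (alg hs)) (\<lambda>\<tau>. ?S (Suc K) (hs @ [\<tau>])) = g hs"
    if "hs \<in> set_pmf (hist_pmf M alg K)" for hs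
  proof -
    have "(\<lambda>\<tau>. ?S (Suc K) (hs @ [\<tau>])) =
        (\<lambda>\<tau>. (?S K hs * exp (kappa * measure_pmf.expectation (traj_pmf M (alg hs)) Y)) *
          exp (- Y \<tau>))"
      using hist_pmf_support[OF that]
      by (simp add: mean_excess_snoc exp_add exp_diff exp_minus field_simps)
    then show ?thesis unfolding g_def by (simp add: mult.assoc)
  qed
  have "measure_pmf.expectation (hist_pmf M alg (Suc K)) (?S (Suc K))
      = measure_pmf.expectation (hist_pmf M alg K)
          (\<lambda>hs. measure_pmf.expectation (traj_pmf M (alg hs)) (\<lambda>\<tau>. ?S (Suc K) (hs @ [\<tau>])))"
    by (simp add: expectation_bind_pmf[OF S_bounded])
  also have "\<dots> = measure_pmf.expectation (hist_pmf M alg K) g"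
    by (rule expectation_pmf_cong) (rule continuation)
  also have "\<dots> \<le> measure_pmf.expectation (hist_pmf M alg K) (?S K)"
    by (rule integral_mono[OF integrable_pmf_bounded[OF g_bounded]
          integrable_pmf_bounded[OF S_bounded] g_le])
  also have "\<dots> \<le> 1" by (rule Suc.IH)
  finally show ?case .
qed

lemma prob_mean_excess_ge_le:
  assumes "\<And>\<tau>. 0 \<le> Y \<tau>" "\<And>\<tau>. Y \<tau> \<le> 1" "0 < \<epsilon>"
  shows "measure_pmf.prob (hist_pmf M alg K) {hs. ln (1 / \<epsilon>) \<le> mean_excess M alg Y K hs} \<le> \<epsilon>"
proof -
  let ?p = "hist_pmf M alg K"
  let ?S = "\<lambda>hs. exp (mean_excess M alg Y K hs)"
  have "{hs. ln (1 / \<epsilon>) \<le> mean_excess M alg Y K hs} = {hs \<in> space (measure_pmf ?p). 1 / \<epsilon> \<le> ?S hs}"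
    using ln_le_cancel_iff[of "1 / \<epsilon>" "exp _"] assms(3) by auto
  also have "measure_pmf.prob ?p \<dots> \<le> measure_pmf.expectation ?p ?S / (1 / \<epsilon>)"
    using abs_le_D1[OF mean_excess_abs_le[of Y, OF assms(1,2)]] assms(3)
    by (intro integral_Markov_inequality_measure integrable_pmf_bounded[where B="exp (real K)"])
      auto
  also have "\<dots> \<le> \<epsilon>"
    using expectation_exp_mean_excess_le_1[of Y, OF assms(1,2)] assms(3) by (simp add: field_simps)
  finally show ?thesis .
qed

lemma ln_two_div_le_ln_ln_div:
  fixes \<delta> :: real
  assumes "0 < \<delta>" "\<delta> \<le> 1" "3 \<le> K"
  shows "ln (2 / \<delta>) \<le> 13 * ln (ln (real K) / \<delta>)"
proof -
  have ln_lower: "1 - 1 / x \<le> ln x" if "0 < x" for x :: real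
    using ln_le_minus_one[of "1 / x"] that by (simp add: ln_div)
  have "ln (3::real) = ln (272 / 100) + ln (300 / 272)"
    by (simp flip: ln_mult_pos)
  then have "109 / 100 \<le> ln (3::real)"
    using ln_272_gt_1 ln_lower[of "300 / 272"] by simp
  moreover have "ln 3 \<le> ln (real K)" using assms(3) by simp
  ultimately have "109 / 100 \<le> ln (real K)" by linarith
  then have "ln (109 / 100) \<le> ln (ln (real K))" by simp
  then have "9 / 109 \<le> ln (ln (real K))" using ln_lower[of "109 / 100"] by simp
  moreover have "ln (2 / \<delta>) = ln 2 - ln \<delta>" "ln (ln (real K) / \<delta>) = ln (ln (real K)) - ln \<delta>"
    using assms \<open>109 / 100 \<le> ln (real K)\<close> by (simp_all add: ln_div)
  moreover have "ln \<delta> \<le> 0" using assms(1,2) by simp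
  ultimately show ?thesis using ln_2_less_1 by linarith
qed

text \<open>The clamping to \<open>[0, 1]\<close> only matters off the support of the trajectory distributions.\<close>
definition normalized_gap :: "mdp \<Rightarrow> real \<Rightarrow> traj \<Rightarrow> real" where
  "normalized_gap M \<beta> \<tau> = max 0 (min 1 (episode_gap M \<beta> \<tau> / gap_bound M \<beta>))"

lemma episode_gap_eq_normalized_gap:
  assumes "valid_mdp M" "\<beta> \<noteq> 0" "\<pi> \<in> policies M" "\<tau> \<in> set_pmf (traj_pmf M \<pi>)"
  shows "episode_gap M \<beta> \<tau> = gap_bound M \<beta> * normalized_gap M \<beta> \<tau>"
  using episode_gap_on_support(2,3)[OF assms] gap_bound_pos[OF assms(1,2)]
  unfolding normalized_gap_def by simp

lemma regret_le_gap_bound_mult_expected_normalized_gap: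
  assumes "valid_mdp M" "\<beta> \<noteq> 0" "\<And>hs. alg hs \<in> policies M"
  shows "regret M \<beta> alg K hs \<le> gap_bound M \<beta> *
    (\<Sum>k<K. measure_pmf.expectation (traj_pmf M (alg (take k hs))) (normalized_gap M \<beta>))"
  unfolding regret_def sum_distrib_left
proof (rule sum_mono)
  fix k
  let ?p = "traj_pmf M (alg (take k hs))"
  have "Vstar M \<beta> 1 (init M) - Vpi M \<beta> (alg (take k hs)) 1 (init M)
      \<le> measure_pmf.expectation ?p (episode_gap M \<beta>)"
    by (rule episode_regret_le_expected_gap[OF assms(1,2,3)])
  also have "\<dots> = measure_pmf.expectation ?p (\<lambda>\<tau>. gap_bound M \<beta> * normalized_gap M \<beta> \<tau>)"
    by (rule expectation_pmf_cong) (rule episode_gap_eq_normalized_gap[OF assms(1,2,3)])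
  finally show "Vstar M \<beta> 1 (init M) - Vpi M \<beta> (alg (take k hs)) 1 (init M)
      \<le> gap_bound M \<beta> * measure_pmf.expectation ?p (normalized_gap M \<beta>)"
    by simp
qed

lemma gapsum_eq_gap_bound_mult_normalized_gap:
  assumes "valid_mdp M" "\<beta> \<noteq> 0" "\<And>hs. alg hs \<in> policies M" "hs \<in> set_pmf (hist_pmf M alg K)"
  shows "gapsum M \<beta> K hs = gap_bound M \<beta> * (\<Sum>k<K. normalized_gap M \<beta> (hs ! k))"
  unfolding gapsum_def sum_distrib_left episode_gap_def[symmetric]
  using episode_gap_eq_normalized_gap[OF assms(1,2,3)] hist_pmf_support[OF assms(4)]
  by (intro sum.cong) auto

lemma regret_bound_event_if_mean_excess_small:
  assumes "valid_mdp M" "\<beta> \<noteq> 0" "\<And>hs. alg hs \<in> policies M"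
    and "0 < \<delta>" "\<delta> \<le> 1" "3 \<le> K" "hs \<in> set_pmf (hist_pmf M alg K)"
    and "mean_excess M alg (normalized_gap M \<beta>) K hs < ln (2 / \<delta>)"
  shows "hs \<in> regret_bound_event M \<beta> 26 K \<delta> alg"
proof -
  let ?B = "gap_bound M \<beta>"
  define E where
    "E = (\<Sum>k<K. measure_pmf.expectation (traj_pmf M (alg (take k hs))) (normalized_gap M \<beta>))"
  define Y where "Y = (\<Sum>k<K. normalized_gap M \<beta> (hs ! k))"
  have "0 < ?B" by (rule gap_bound_pos[OF assms(1,2)])
  have "0 \<le> E" unfolding E_def normalized_gap_def by (intro sum_nonneg integral_nonneg_AE) simp
  have "0 \<le> Y" unfolding Y_def normalized_gap_def by (intro sum_nonneg) simp
  have "kappa * E < Y + ln (2 / \<delta>)"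
    using assms(8) unfolding mean_excess_def E_def Y_def
    by (simp add: sum_subtractf sum_distrib_left)
  moreover have "E / 2 \<le> kappa * E"
    using mult_right_mono[OF kappa_bounds(1) \<open>0 \<le> E\<close>] by simp
  ultimately have "E \<le> 2 * Y + 2 * ln (2 / \<delta>)" by linarith
  then have "regret M \<beta> alg K hs \<le> ?B * (2 * Y + 2 * ln (2 / \<delta>))"
    using regret_le_gap_bound_mult_expected_normalized_gap[of M \<beta> alg K hs, OF assms(1-3)] \<open>0 < ?B\<close>
    unfolding E_def[symmetric] by (meson mult_left_mono less_imp_le order_trans)
  also have "\<dots> = 2 * gapsum M \<beta> K hs + ?B * (2 * ln (2 / \<delta>))"
    unfolding gapsum_eq_gap_bound_mult_normalized_gap[OF assms(1-3,7)] Y_def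
    by (simp add: algebra_simps)
  also have "\<dots> \<le> 26 * gapsum M \<beta> K hs + ?B * (26 * ln (ln (real K) / \<delta>))"
    using ln_two_div_le_ln_ln_div[OF assms(4-6)] \<open>0 < ?B\<close> \<open>0 \<le> Y\<close>
      gapsum_eq_gap_bound_mult_normalized_gap[OF assms(1-3,7)]
    unfolding Y_def[symmetric] by (intro add_mono mult_left_mono) auto
  finally show ?thesis
    unfolding regret_bound_event_def gap_bound_def by (simp add: algebra_simps)
qed

lemma prob_regret_bound_event:
  assumes "valid_mdp M" "\<beta> \<noteq> 0" "\<And>hs. alg hs \<in> policies M" "0 < \<delta>" "\<delta> \<le> 1" "3 \<le> K"
  shows "1 - \<delta> / 2 \<le> measure_pmf.prob (hist_pmf M alg K) (regret_bound_event M \<beta> 26 K \<delta> alg)"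
proof -
  let ?p = "hist_pmf M alg K"
  let ?A = "{hs. ln (1 / (\<delta> / 2)) \<le> mean_excess M alg (normalized_gap M \<beta>) K hs}"
  have "measure_pmf.prob ?p ?A \<le> \<delta> / 2"
    using assms(4) by (intro prob_mean_excess_ge_le) (simp_all add: normalized_gap_def)
  moreover have "measure_pmf.prob ?p (space (measure_pmf ?p) - ?A) = 1 - measure_pmf.prob ?p ?A"
    by (rule measure_pmf.prob_compl) simp
  moreover have "measure_pmf.prob ?p (space (measure_pmf ?p) - ?A)
      \<le> measure_pmf.prob ?p (regret_bound_event M \<beta> 26 K \<delta> alg)"
    using regret_bound_event_if_mean_excess_small[OF assms]
    by (intro measure_pmf.finite_measure_mono_AE) (auto simp: AE_measure_pmf_iff not_le)
  ultimately show ?thesis by linarith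
qed

theorem lemma1:
  shows "\<exists>C>0. \<forall>M \<beta> \<delta> c K sel.
    valid_mdp M \<and> \<beta> \<noteq> 0 \<and> 0 < \<delta> \<and> \<delta> \<le> 1 \<and> c > 0 \<and> K \<ge> 3 \<and> argmax_sel (nA M) sel \<longrightarrow>
      measure_pmf.prob (hist_pmf M (RSVI2 sel M \<beta> c K \<delta>) K)
         (regret_bound_event M \<beta> C K \<delta> (RSVI2 sel M \<beta> c K \<delta>)) \<ge> 1 - \<delta> / 2 \<and>
      measure_pmf.prob (hist_pmf M (RSQ2 sel M \<beta> c K \<delta>) K)
         (regret_bound_event M \<beta> C K \<delta> (RSQ2 sel M \<beta> c K \<delta>)) \<ge> 1 - \<delta> / 2"
proof (intro exI[of _ 26] conjI allI impI)
  fix M :: mdp and \<beta> \<delta> c :: real and K :: nat and sel :: "(nat \<Rightarrow> real) \<Rightarrow> nat"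
  assume "valid_mdp M \<and> \<beta> \<noteq> 0 \<and> 0 < \<delta> \<and> \<delta> \<le> 1 \<and> c > 0 \<and> K \<ge> 3 \<and> argmax_sel (nA M) sel"
  then have hyps: "valid_mdp M" "\<beta> \<noteq> 0" "0 < \<delta>" "\<delta> \<le> 1" "3 \<le> K"
    and "\<And>f. sel f < nA M" unfolding argmax_sel_def by auto
  then have "RSVI2 sel M \<beta> c K \<delta> hs \<in> policies M" "RSQ2 sel M \<beta> c K \<delta> hs \<in> policies M" for hs
    unfolding policies_def RSVI2_def RSQ2_def by (simp_all split: prod.splits)
  then show "measure_pmf.prob (hist_pmf M (RSVI2 sel M \<beta> c K \<delta>) K)
         (regret_bound_event M \<beta> 26 K \<delta> (RSVI2 sel M \<beta> c K \<delta>)) \<ge> 1 - \<delta> / 2"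
    and "measure_pmf.prob (hist_pmf M (RSQ2 sel M \<beta> c K \<delta>) K)
         (regret_bound_event M \<beta> 26 K \<delta> (RSQ2 sel M \<beta> c K \<delta>)) \<ge> 1 - \<delta> / 2"
    using prob_regret_bound_event[OF hyps(1,2) _ hyps(3-5)] by blast+
qed simp

end
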